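(* Let $G$ be a simple stochastic game, $A$ a subset of the arcs of $G$, and $\sigma,\sigma'$ two positional MAX strategies. If $\sigma' \succ_{G[A,\sigma]} \sigma$, then $\sigma' >_G \sigma$.
   Context: A simple stochastic game (SSG) $G$ is a finite directed graph whose vertex set is partitioned into MAX vertices, MIN vertices, random vertices and a nonempty set of sinks; every non-sink vertex has at least one outgoing arc, every sink has exactly one outgoing arc, a self-loop; each random vertex $x$ carries a rational probability distribution $p_x$ on its out-neighbourhood, positive on every out-neighbour; each sink $s$ has rational value $\mathrm{Val}(s)\in[0,1]$. The game is not assumed to be stopping. A positional MAX (resp. MIN) strategy assigns to each MAX (resp. MIN) vertex one of its out-neighbours. Under $\sigma,\tau$ from start $x_0$, the random play moves from MAX vertex $x$ to $\sigma(x)$, from MIN vertex $x$ to $\tau(x)$, from random vertex $x$ to an out-neighbour drawn by $p_x$ independently, and stays at a sink once reached; its value is $\mathrm{Val}(s)$ if it reaches sink $s$, else $0$ (in particular if it never reaches a sink), and $v^G_{\sigma,\tau}(x_0)$ is its expectation. $v^G_\sigma:=v^G_{\sigma,\tau}$ for a best response $\tau$, i.e. a MIN strategy with $v_{\sigma,\tau}\le v_{\sigma,\tau'}$ pointwise for all MIN strategies $\tau'$ (a positional one exists). Vectors are compared pointwise: $v\ge v'$ if $v(x)\ge v'(x)$ for all $x$, and $v>v'$ if $v\ge v'$ and $v\ne v'$. We write $\sigma'>_G\sigma$ if $v^G_{\sigma'}>v^G_\sigma$, and $\sigma'\succ_G\sigma$ if $\sigma'>_G\sigma$ and, for every MAX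 vertex $x$ with $v^G_{\sigma'}(x)=v^G_\sigma(x)$, $\sigma'(x)=\sigma(x)$. Transformed game: $G[A,\sigma]$ is obtained from a copy of $G$ by replacing each arc $e=(x,y)\in A$ by an arc $(x,s_e)$ to a new sink $s_e$ of value $v^G_\sigma(y)$ (for random $x$, $p_x(s_e)=p_x(y)$); $y$ is kept. Strategies of $G$ and $G[A,\sigma]$ are identified (a MAX vertex $x$ with $\sigma(x)=y$, $(x,y)\in A$, moves to $s_{(x,y)}$), and value vectors in $G[A,\sigma]$ are compared only on the vertices of $G$. *)

theory Defs
  imports "HOL-Probability.Probability_Mass_Function"
begin

record 'v ssg =
  verts :: "'v set"
  maxv  :: "'v set"
  minv  :: "'v set"
  randv :: "'v set"
  sinks :: "'v set"
  arcs  :: "('v \<times> 'v) set"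
  prob  :: "'v \<Rightarrow> 'v \<Rightarrow> real"
  sval  :: "'v \<Rightarrow> real"

definition out :: "('v, 'b) ssg_scheme \<Rightarrow> 'v \<Rightarrow> 'v set" where
  "out G x = {y. (x, y) \<in> arcs G}"

definition ssg :: "('v, 'b) ssg_scheme \<Rightarrow> bool" where
  "ssg G \<longleftrightarrow>
     finite (verts G) \<and>
     maxv G \<union> minv G \<union> randv G \<union> sinks G = verts G \<and>
     maxv G \<inter> minv G = {} \<and> maxv G \<inter> randv G = {} \<and> maxv G \<inter> sinks G = {} \<and>
     minv G \<inter> randv G = {} \<and> minv G \<inter> sinks G = {} \<and> randv G \<inter> sinks G = {} \<and>
     sinks G \<noteq> {} \<and>
     arcs G \<subseteq> verts G \<times> verts G \<and>
     (\<forall>x \<in> verts G - sinks G. out G x \<noteq> {}) \<and>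
     (\<forall>s \<in> sinks G. out G s = {s}) \<and>
     (\<forall>x \<in> randv G. (\<forall>y \<in> out G x. prob G x y > 0 \<and> prob G x y \<in> \<rat>) \<and>
                      (\<Sum>y \<in> out G x. prob G x y) = 1) \<and>
     (\<forall>s \<in> sinks G. 0 \<le> sval G s \<and> sval G s \<le> 1 \<and> sval G s \<in> \<rat>)"

text \<open>Positional strategies (values outside the player's vertices are irrelevant).\<close>
definition is_max_strategy :: "('v, 'b) ssg_scheme \<Rightarrow> ('v \<Rightarrow> 'v) \<Rightarrow> bool" where
  "is_max_strategy G \<sigma> \<longleftrightarrow> (\<forall>x \<in> maxv G. (x, \<sigma> x) \<in> arcs G)"

definition is_min_strategy :: "('v, 'b) ssg_scheme \<Rightarrow> ('v \<Rightarrow> 'v) \<Rightarrow> bool" where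
  "is_min_strategy G \<tau> \<longleftrightarrow> (\<forall>x \<in> minv G. (x, \<tau> x) \<in> arcs G)"

definition step :: "('v, 'b) ssg_scheme \<Rightarrow> ('v \<Rightarrow> 'v) \<Rightarrow> ('v \<Rightarrow> 'v) \<Rightarrow> 'v \<Rightarrow> 'v pmf" where
  "step G \<sigma> \<tau> x =
     (if x \<in> sinks G then return_pmf x
      else if x \<in> maxv G then return_pmf (\<sigma> x)
      else if x \<in> minv G then return_pmf (\<tau> x)
      else embed_pmf (\<lambda>y. if y \<in> out G x then prob G x y else 0))"

primrec state_dist :: "('v, 'b) ssg_scheme \<Rightarrow> ('v \<Rightarrow> 'v) \<Rightarrow> ('v \<Rightarrow> 'v) \<Rightarrow> nat \<Rightarrow> 'v \<Rightarrow> 'v pmf" where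
  "state_dist G \<sigma> \<tau> 0 x = return_pmf x"
| "state_dist G \<sigma> \<tau> (Suc n) x = bind_pmf (state_dist G \<sigma> \<tau> n x) (step G \<sigma> \<tau>)"

text \<open>Probability that the play from x reaches sink s (sinks are absorbing, so
  this is the limit of the probability of being at s at time n).\<close>
definition reach_prob :: "('v, 'b) ssg_scheme \<Rightarrow> ('v \<Rightarrow> 'v) \<Rightarrow> ('v \<Rightarrow> 'v) \<Rightarrow> 'v \<Rightarrow> 'v \<Rightarrow> real" where
  "reach_prob G \<sigma> \<tau> x s = lim (\<lambda>n. pmf (state_dist G \<sigma> \<tau> n x) s)"

definition play_value :: "('v, 'b) ssg_scheme \<Rightarrow> ('v \<Rightarrow> 'v) \<Rightarrow> ('v \<Rightarrow> 'v) \<Rightarrow> 'v \<Rightarrow> real" where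
  "play_value G \<sigma> \<tau> x = (\<Sum>s \<in> sinks G. sval G s * reach_prob G \<sigma> \<tau> x s)"

definition is_best_response :: "('v, 'b) ssg_scheme \<Rightarrow> ('v \<Rightarrow> 'v) \<Rightarrow> ('v \<Rightarrow> 'v) \<Rightarrow> bool" where
  "is_best_response G \<sigma> \<tau> \<longleftrightarrow> is_min_strategy G \<tau> \<and>
     (\<forall>\<tau>'. is_min_strategy G \<tau>' \<longrightarrow> (\<forall>x \<in> verts G. play_value G \<sigma> \<tau> x \<le> play_value G \<sigma> \<tau>' x))"

definition max_value :: "('v, 'b) ssg_scheme \<Rightarrow> ('v \<Rightarrow> 'v) \<Rightarrow> 'v \<Rightarrow> real" where
  "max_value G \<sigma> x = play_value G \<sigma> (SOME \<tau>. is_best_response G \<sigma> \<tau>) x"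

definition strat_gt :: "('v, 'b) ssg_scheme \<Rightarrow> 'v set \<Rightarrow> ('v \<Rightarrow> 'v) \<Rightarrow> ('v \<Rightarrow> 'v) \<Rightarrow> bool" where
  "strat_gt G W \<sigma>' \<sigma> \<longleftrightarrow>
     (\<forall>x \<in> W. max_value G \<sigma> x \<le> max_value G \<sigma>' x) \<and>
     (\<exists>x \<in> W. max_value G \<sigma> x \<noteq> max_value G \<sigma>' x)"

definition strat_succ :: "('v, 'b) ssg_scheme \<Rightarrow> 'v set \<Rightarrow> ('v \<Rightarrow> 'v) \<Rightarrow> ('v \<Rightarrow> 'v) \<Rightarrow> bool" where
  "strat_succ G W \<sigma>' \<sigma> \<longleftrightarrow> strat_gt G W \<sigma>' \<sigma> \<and>
     (\<forall>x \<in> maxv G. max_value G \<sigma>' x = max_value G \<sigma> x \<longrightarrow> \<sigma>' x = \<sigma> x)"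

text \<open>Vertices: Inl x for x a vertex of G, Inr e for the new sink s_e (e \<in> A).\<close>
definition transform :: "('v, 'b) ssg_scheme \<Rightarrow> ('v \<times> 'v) set \<Rightarrow> ('v \<Rightarrow> 'v) \<Rightarrow> ('v + 'v \<times> 'v) ssg" where
  "transform G A \<sigma> = \<lparr>
     verts = Inl ` verts G \<union> Inr ` A,
     maxv = Inl ` maxv G,
     minv = Inl ` minv G,
     randv = Inl ` randv G,
     sinks = Inl ` sinks G \<union> Inr ` A,
     arcs = {(Inl x, Inl y) | x y. (x, y) \<in> arcs G - A}
          \<union> {(Inl x, Inr (x, y)) | x y. (x, y) \<in> A}
          \<union> {(Inr e, Inr e) | e. e \<in> A},
     prob = (\<lambda>a b. case (a, b) of
               (Inl x, Inl y) \<Rightarrow> prob G x y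
             | (Inl x, Inr (x', y)) \<Rightarrow> (if x' = x then prob G x y else 0)
             | _ \<Rightarrow> 0),
     sval = (\<lambda>a. case a of Inl s \<Rightarrow> sval G s | Inr (x, y) \<Rightarrow> max_value G \<sigma> y) \<rparr>"

definition lift_strategy :: "('v \<times> 'v) set \<Rightarrow> ('v \<Rightarrow> 'v) \<Rightarrow> ('v + 'v \<times> 'v) \<Rightarrow> ('v + 'v \<times> 'v)" where
  "lift_strategy A \<sigma> a = (case a of
      Inl x \<Rightarrow> (if (x, \<sigma> x) \<in> A then Inr (x, \<sigma> x) else Inl (\<sigma> x))
    | Inr e \<Rightarrow> Inr e)"

end

theory Submission
  imports Defs
begin

text \<open>Write \<open>u\<close>, \<open>u\<^sub>H\<close>, \<open>w\<^sub>H\<close>, \<open>w\<close> for the values of \<open>\<sigma>\<close> in \<open>G\<close>, of \<open>\<sigma>\<close> and \<open>\<sigma>'\<close> in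
  \<open>H = G[A,\<sigma>]\<close>, and of \<open>\<sigma>'\<close> in \<open>G\<close>. The hypothesis gives \<open>u\<^sub>H \<le> w\<^sub>H\<close>, strictly somewhere.
  Mixing a best response against \<open>\<sigma>\<close> in \<open>G\<close> with one in \<open>H\<close> gives a MIN strategy in \<open>G\<close>
  whose value is at most \<open>min u u\<^sub>H\<close>, so \<open>u \<le> u\<^sub>H\<close>.

  For \<open>w\<^sub>H \<le> w\<close> use a maximum principle. Against a best response \<open>\<tau>\<close> to \<open>\<sigma>'\<close>, the excess
  \<open>w\<^sub>H - w\<close> is subharmonic in \<open>G\<close> (the new sinks of \<open>H\<close> carry \<open>u \<le> u\<^sub>H \<le> w\<^sub>H\<close>) and vanishes at
  sinks. So the set \<open>S\<close> where it attains a positive maximum \<open>D\<close> is closed for the play and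
  contains no sink, hence \<open>w = 0\<close> and \<open>w\<^sub>H = D\<close> on \<open>S\<close>. If the play from \<open>S\<close> never uses an arc
  of \<open>A\<close>, it is also trapped in \<open>S\<close> in \<open>H\<close>, so \<open>w\<^sub>H = 0\<close> there. Otherwise it reaches a new sink
  \<open>s\<^sub>e\<close>, \<open>e = (x, y) \<in> A\<close>, so \<open>u y = D\<close> with \<open>y \<in> S\<close>. Where \<open>u = D\<close> on \<open>S\<close>, we get \<open>u\<^sub>H = w\<^sub>H\<close>, so
  \<open>\<sigma>'\<close> agrees with \<open>\<sigma>\<close>. Then \<open>{u = D} \<inter> S\<close> is closed for \<open>\<sigma>\<close> as well, forcing \<open>u y = 0\<close>.\<close>

section \<open>Markov chains of positional strategies\<close>

definition finite_chain :: "('v, 'b) ssg_scheme \<Rightarrow> ('v \<Rightarrow> 'v) \<Rightarrow> ('v \<Rightarrow> 'v) \<Rightarrow> bool" where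
  "finite_chain X \<sigma> \<tau> \<longleftrightarrow> finite (verts X) \<and> sinks X \<subseteq> verts X \<and>
     (\<forall>x \<in> verts X. set_pmf (step X \<sigma> \<tau> x) \<subseteq> verts X)"

definition step_expect ::
  "('v, 'b) ssg_scheme \<Rightarrow> ('v \<Rightarrow> 'v) \<Rightarrow> ('v \<Rightarrow> 'v) \<Rightarrow> ('v \<Rightarrow> real) \<Rightarrow> 'v \<Rightarrow> real" where
  "step_expect X \<sigma> \<tau> f x = (\<Sum>y\<in>verts X. pmf (step X \<sigma> \<tau> x) y * f y)"

definition stage_value :: "('v, 'b) ssg_scheme \<Rightarrow> ('v \<Rightarrow> 'v) \<Rightarrow> ('v \<Rightarrow> 'v) \<Rightarrow> nat \<Rightarrow> 'v \<Rightarrow> real" where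
  "stage_value X \<sigma> \<tau> n x = (\<Sum>s\<in>sinks X. sval X s * pmf (state_dist X \<sigma> \<tau> n x) s)"

lemma finite_chainD:
  assumes "finite_chain X \<sigma> \<tau>"
  shows "finite (verts X)" "finite (sinks X)" "sinks X \<subseteq> verts X"
    "x \<in> verts X \<Longrightarrow> set_pmf (step X \<sigma> \<tau> x) \<subseteq> verts X"
  using assms finite_subset unfolding finite_chain_def by blast+

lemma step_sink: "s \<in> sinks X \<Longrightarrow> step X \<sigma> \<tau> s = return_pmf s"
  by (simp add: step_def)

lemma state_dist_sink: "s \<in> sinks X \<Longrightarrow> state_dist X \<sigma> \<tau> n s = return_pmf s"
  by (induction n) (auto simp: step_sink bind_return_pmf)

lemma state_dist_Suc_first:
  "state_dist X \<sigma> \<tau> (Suc n) x = bind_pmf (step X \<sigma> \<tau> x) (state_dist X \<sigma> \<tau> n)"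
proof (induction n arbitrary: x)
  case 0
  then show ?case by (simp add: bind_return_pmf bind_return_pmf')
next
  case (Suc n)
  have "state_dist X \<sigma> \<tau> (Suc (Suc n)) x = bind_pmf (state_dist X \<sigma> \<tau> (Suc n) x) (step X \<sigma> \<tau>)"
    by simp
  also have "\<dots> = bind_pmf (step X \<sigma> \<tau> x) (\<lambda>y. bind_pmf (state_dist X \<sigma> \<tau> n y) (step X \<sigma> \<tau>))"
    by (subst Suc.IH) (simp add: bind_assoc_pmf)
  finally show ?case by simp
qed

lemma set_pmf_state_dist_subset:
  "finite_chain X \<sigma> \<tau> \<Longrightarrow> x \<in> verts X \<Longrightarrow> set_pmf (state_dist X \<sigma> \<tau> n x) \<subseteq> verts X"
  by (induction n) (auto dest: finite_chainD(4))

lemma pmf_bind_finite_support: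
  assumes "finite V" "set_pmf M \<subseteq> V"
  shows "pmf (bind_pmf M f) s = (\<Sum>y\<in>V. pmf M y * pmf (f y) s)"
  unfolding pmf_bind using assms by (subst integral_measure_pmf[of V]) auto

lemma pmf_state_dist_Suc_first:
  assumes "finite_chain X \<sigma> \<tau>" "x \<in> verts X"
  shows "pmf (state_dist X \<sigma> \<tau> (Suc n) x) s =
    (\<Sum>y\<in>verts X. pmf (step X \<sigma> \<tau> x) y * pmf (state_dist X \<sigma> \<tau> n y) s)"
  using assms finite_chainD[OF assms(1)] unfolding state_dist_Suc_first
  by (intro pmf_bind_finite_support) auto

lemma incseq_pmf_state_dist_sink:
  assumes "finite_chain X \<sigma> \<tau>" "x \<in> verts X" "s \<in> sinks X"
  shows "incseq (\<lambda>n. pmf (state_dist X \<sigma> \<tau> n x) s)"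
proof (rule incseq_SucI)
  fix n
  have s: "s \<in> verts X" using assms finite_chainD(3)[OF assms(1)] by blast
  have "pmf (state_dist X \<sigma> \<tau> (Suc n) x) s =
      (\<Sum>y\<in>verts X. pmf (state_dist X \<sigma> \<tau> n x) y * pmf (step X \<sigma> \<tau> y) s)"
    unfolding state_dist.simps using assms finite_chainD[OF assms(1)]
    by (intro pmf_bind_finite_support) (auto simp: set_pmf_state_dist_subset)
  also have "\<dots> \<ge> pmf (state_dist X \<sigma> \<tau> n x) s * pmf (step X \<sigma> \<tau> s) s"
    by (rule member_le_sum[OF s]) (auto simp: finite_chainD(1)[OF assms(1)])
  finally show "pmf (state_dist X \<sigma> \<tau> n x) s \<le> pmf (state_dist X \<sigma> \<tau> (Suc n) x) s"
    using assms(3) by (simp add: step_sink)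
qed

lemma reach_prob_LIMSEQ:
  assumes "finite_chain X \<sigma> \<tau>" "x \<in> verts X" "s \<in> sinks X"
  shows "(\<lambda>n. pmf (state_dist X \<sigma> \<tau> n x) s) \<longlonglongrightarrow> reach_prob X \<sigma> \<tau> x s"
proof -
  have "convergent (\<lambda>n. pmf (state_dist X \<sigma> \<tau> n x) s)"
    using incseq_pmf_state_dist_sink[OF assms]
    by (intro Bseq_monoseq_convergent monoI1 BseqI'[of _ 1]) (auto simp: incseq_def pmf_le_1)
  then show ?thesis unfolding reach_prob_def by (simp add: convergent_LIMSEQ_iff)
qed

lemma stage_value_LIMSEQ:
  "finite_chain X \<sigma> \<tau> \<Longrightarrow> x \<in> verts X \<Longrightarrow> (\<lambda>n. stage_value X \<sigma> \<tau> n x) \<longlonglongrightarrow> play_value X \<sigma> \<tau> x"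
  unfolding stage_value_def play_value_def by (intro tendsto_sum tendsto_mult_left reach_prob_LIMSEQ)

lemma stage_value_0:
  "finite (sinks X) \<Longrightarrow> stage_value X \<sigma> \<tau> 0 x = (if x \<in> sinks X then sval X x else 0)"
  unfolding stage_value_def by (simp add: indicator_def)

lemma stage_value_sink:
  "finite (sinks X) \<Longrightarrow> s \<in> sinks X \<Longrightarrow> stage_value X \<sigma> \<tau> n s = sval X s"
  unfolding stage_value_def by (simp add: state_dist_sink indicator_def)

lemma stage_value_Suc:
  "finite_chain X \<sigma> \<tau> \<Longrightarrow> x \<in> verts X \<Longrightarrow>
    stage_value X \<sigma> \<tau> (Suc n) x = step_expect X \<sigma> \<tau> (stage_value X \<sigma> \<tau> n) x"
  unfolding stage_value_def step_expect_def pmf_state_dist_Suc_first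
  by (simp add: sum_distrib_left sum_distrib_right mult_ac sum.swap[of _ "sinks X"])

lemma step_expect_mono:
  "(\<And>y. y \<in> verts X \<Longrightarrow> f y \<le> g y) \<Longrightarrow> step_expect X \<sigma> \<tau> f x \<le> step_expect X \<sigma> \<tau> g x"
  unfolding step_expect_def by (intro sum_mono mult_left_mono) auto

lemma step_expect_diff:
  "step_expect X \<sigma> \<tau> (\<lambda>y. f y - g y) x = step_expect X \<sigma> \<tau> f x - step_expect X \<sigma> \<tau> g x"
  unfolding step_expect_def by (simp add: right_diff_distrib sum_subtractf)

lemma play_value_step:
  assumes "finite_chain X \<sigma> \<tau>" "x \<in> verts X"
  shows "play_value X \<sigma> \<tau> x = step_expect X \<sigma> \<tau> (play_value X \<sigma> \<tau>) x"
proof (rule LIMSEQ_unique)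
  show "(\<lambda>n. stage_value X \<sigma> \<tau> (Suc n) x) \<longlonglongrightarrow> play_value X \<sigma> \<tau> x"
    using stage_value_LIMSEQ[OF assms] by (rule LIMSEQ_Suc)
  show "(\<lambda>n. stage_value X \<sigma> \<tau> (Suc n) x) \<longlonglongrightarrow> step_expect X \<sigma> \<tau> (play_value X \<sigma> \<tau>) x"
    unfolding stage_value_Suc[OF assms] step_expect_def
    by (intro tendsto_sum tendsto_mult_left stage_value_LIMSEQ assms(1))
qed

lemma play_value_sink:
  assumes "finite_chain X \<sigma> \<tau>" "s \<in> sinks X"
  shows "play_value X \<sigma> \<tau> s = sval X s"
proof -
  have "s \<in> verts X" using assms finite_chainD(3) by blast
  then have "(\<lambda>n. stage_value X \<sigma> \<tau> n s) \<longlonglongrightarrow> play_value X \<sigma> \<tau> s"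
    by (rule stage_value_LIMSEQ[OF assms(1)])
  then show ?thesis
    by (simp add: stage_value_sink[OF finite_chainD(2)[OF assms(1)] assms(2)] LIMSEQ_const_iff)
qed

lemma play_value_nonneg:
  assumes "finite_chain X \<sigma> \<tau>" "x \<in> verts X" "\<forall>s\<in>sinks X. 0 \<le> sval X s"
  shows "0 \<le> play_value X \<sigma> \<tau> x"
proof (rule LIMSEQ_le_const[OF stage_value_LIMSEQ[OF assms(1,2)]])
  show "\<exists>N. \<forall>n\<ge>N. 0 \<le> stage_value X \<sigma> \<tau> n x"
    using assms(3) unfolding stage_value_def by (auto intro!: sum_nonneg)
qed

lemma play_value_le_superharmonic:
  assumes "finite_chain X \<sigma> \<tau>" "\<forall>x\<in>verts X. 0 \<le> v x"
    and "\<forall>x\<in>verts X - sinks X. step_expect X \<sigma> \<tau> v x \<le> v x"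
    and "\<forall>s\<in>sinks X. sval X s \<le> v s" and "x \<in> verts X"
  shows "play_value X \<sigma> \<tau> x \<le> v x"
proof -
  note fin = finite_chainD(2)[OF assms(1)]
  have "\<forall>x\<in>verts X. stage_value X \<sigma> \<tau> n x \<le> v x" for n
  proof (induction n)
    case 0
    then show ?case using assms by (auto simp: stage_value_0[OF fin])
  next
    case (Suc n)
    show ?case
    proof
      fix x assume x: "x \<in> verts X"
      show "stage_value X \<sigma> \<tau> (Suc n) x \<le> v x"
      proof (cases "x \<in> sinks X")
        case True
        then show ?thesis using assms stage_value_sink[OF fin True] by auto
      next
        case False
        have "stage_value X \<sigma> \<tau> (Suc n) x = step_expect X \<sigma> \<tau> (stage_value X \<sigma> \<tau> n) x"
          by (rule stage_value_Suc[OF assms(1) x])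
        also have "\<dots> \<le> step_expect X \<sigma> \<tau> v x"
          using Suc.IH by (intro step_expect_mono) auto
        also have "\<dots> \<le> v x" using assms(3) x False by auto
        finally show ?thesis .
      qed
    qed
  qed
  then show ?thesis
    using assms(5) by (intro LIMSEQ_le_const2[OF stage_value_LIMSEQ[OF assms(1,5)]]) auto
qed

lemma play_value_closed_nonsinks:
  assumes "finite_chain X \<sigma> \<tau>" "S \<subseteq> verts X - sinks X"
    and "\<forall>x\<in>S. set_pmf (step X \<sigma> \<tau> x) \<subseteq> S" "x \<in> S"
  shows "play_value X \<sigma> \<tau> x = 0"
proof -
  have "set_pmf (state_dist X \<sigma> \<tau> n x) \<subseteq> S" for n
    by (induction n) (use assms in auto)
  then have "stage_value X \<sigma> \<tau> n x = 0" for n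
    unfolding stage_value_def using assms(2) by (intro sum.neutral) (force simp: set_pmf_eq)
  then show ?thesis using stage_value_LIMSEQ[of X \<sigma> \<tau> x] assms by (auto simp: LIMSEQ_const_iff)
qed

lemma step_expect_ge_bound_support:
  assumes "finite_chain X \<sigma> \<tau>" "x \<in> verts X"
    and "\<forall>y\<in>set_pmf (step X \<sigma> \<tau> x). f y \<le> D" "D \<le> step_expect X \<sigma> \<tau> f x"
    and "y \<in> set_pmf (step X \<sigma> \<tau> x)"
  shows "f y = D"
proof -
  let ?M = "step X \<sigma> \<tau> x"
  have fin: "finite (verts X)" and supp: "set_pmf ?M \<subseteq> verts X"
    using finite_chainD[OF assms(1)] assms(2) by auto
  have nonneg: "\<forall>z\<in>verts X. 0 \<le> pmf ?M z * (D - f z)"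
  proof
    fix z show "0 \<le> pmf ?M z * (D - f z)"
      using assms(3) by (cases "z \<in> set_pmf ?M") (auto simp: set_pmf_eq)
  qed
  have "(\<Sum>z\<in>verts X. pmf ?M z * (D - f z)) = D * (\<Sum>z\<in>verts X. pmf ?M z) - step_expect X \<sigma> \<tau> f x"
    unfolding step_expect_def sum_distrib_left sum_subtractf[symmetric]
    by (intro sum.cong refl) (simp only: left_diff_distrib mult.commute)
  also have "\<dots> \<le> 0" using assms(4) sum_pmf_eq_1[OF fin supp] by simp
  finally have "(\<Sum>z\<in>verts X. pmf ?M z * (D - f z)) \<le> 0" .
  moreover have "0 \<le> (\<Sum>z\<in>verts X. pmf ?M z * (D - f z))"
    using nonneg by (intro sum_nonneg) blast
  ultimately have "(\<Sum>z\<in>verts X. pmf ?M z * (D - f z)) = 0" by linarith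
  then have "\<forall>z\<in>verts X. pmf ?M z * (D - f z) = 0"
    using nonneg by (simp add: sum_nonneg_eq_0_iff[OF fin])
  then have "pmf ?M y * (D - f y) = 0" using assms(5) supp by blast
  moreover have "pmf ?M y \<noteq> 0" using assms(5) by (simp add: set_pmf_iff)
  ultimately show ?thesis by simp
qed

section \<open>Well-formed games and best responses\<close>

text \<open>The structural part of \<^const>\<open>ssg\<close> that survives the transformation \<open>G[A,\<sigma>]\<close>:
  the values of the new sinks need not be rational.\<close>
definition wf_game :: "('v, 'b) ssg_scheme \<Rightarrow> bool" where
  "wf_game X \<longleftrightarrow> finite (verts X) \<and> sinks X \<subseteq> verts X \<and> maxv X \<subseteq> verts X \<and>
     minv X \<subseteq> verts X \<and> arcs X \<subseteq> verts X \<times> verts X \<and>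
     maxv X \<inter> sinks X = {} \<and> minv X \<inter> sinks X = {} \<and> maxv X \<inter> minv X = {} \<and>
     (\<forall>x\<in>minv X. out X x \<noteq> {}) \<and>
     (\<forall>x\<in>verts X - sinks X - maxv X - minv X.
        (\<forall>y\<in>out X x. 0 < prob X x y) \<and> (\<Sum>y\<in>out X x. prob X x y) = 1) \<and>
     (\<forall>s\<in>sinks X. 0 \<le> sval X s)"

lemma wf_gameD:
  assumes "wf_game X"
  shows "finite (verts X)" "sinks X \<subseteq> verts X" "maxv X \<subseteq> verts X" "minv X \<subseteq> verts X"
    "arcs X \<subseteq> verts X \<times> verts X" "maxv X \<inter> sinks X = {}" "minv X \<inter> sinks X = {}"
    "maxv X \<inter> minv X = {}" "\<forall>x\<in>minv X. out X x \<noteq> {}"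
    "\<forall>x\<in>verts X - sinks X - maxv X - minv X.
       (\<forall>y\<in>out X x. 0 < prob X x y) \<and> (\<Sum>y\<in>out X x. prob X x y) = 1"
    "\<forall>s\<in>sinks X. 0 \<le> sval X s"
  using assms unfolding wf_game_def by blast+

lemma ssg_wf_game:
  assumes "ssg G"
  shows "wf_game G"
proof -
  have part: "maxv G \<union> minv G \<union> randv G \<union> sinks G = verts G"
    and disj: "maxv G \<inter> minv G = {}" "maxv G \<inter> sinks G = {}" "minv G \<inter> sinks G = {}"
    and out: "\<forall>x \<in> verts G - sinks G. out G x \<noteq> {}"
    and rand: "\<forall>x \<in> randv G. (\<forall>y \<in> out G x. prob G x y > 0) \<and> (\<Sum>y \<in> out G x. prob G x y) = 1"
    and other: "finite (verts G)" "arcs G \<subseteq> verts G \<times> verts G" "\<forall>s\<in>sinks G. 0 \<le> sval G s"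
    using assms by (simp_all add: ssg_def)
  have "verts G - sinks G - maxv G - minv G \<subseteq> randv G" using part by blast
  moreover have "minv G \<subseteq> verts G - sinks G" using part disj by blast
  ultimately show ?thesis
    using part disj out rand other unfolding wf_game_def by (intro conjI) blast+
qed

lemma wf_game_arc_head: "wf_game X \<Longrightarrow> (x, y) \<in> arcs X \<Longrightarrow> y \<in> verts X"
  using wf_gameD(5) by blast

lemma out_subset_verts: "wf_game X \<Longrightarrow> out X x \<subseteq> verts X"
  by (auto simp: out_def dest: wf_game_arc_head)

lemma
  assumes "wf_game X" "x \<in> verts X - sinks X - maxv X - minv X"
  shows pmf_step_random: "pmf (step X \<sigma> \<tau> x) y = (if y \<in> out X x then prob X x y else 0)"
    and set_pmf_step_random: "set_pmf (step X \<sigma> \<tau> x) = out X x"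
proof -
  have fin: "finite (out X x)"
    using out_subset_verts[OF assms(1)] wf_gameD(1)[OF assms(1)] by (rule finite_subset)
  have pos: "\<forall>y\<in>out X x. 0 < prob X x y" and sum1: "(\<Sum>y\<in>out X x. prob X x y) = 1"
    using wf_gameD(10)[OF assms(1)] assms(2) by blast+
  have nonneg: "\<And>y. 0 \<le> (if y \<in> out X x then prob X x y else 0)"
    using pos by (auto simp: less_imp_le)
  have "(\<integral>\<^sup>+y. ennreal (if y \<in> out X x then prob X x y else 0) \<partial>count_space UNIV)
      = (\<integral>\<^sup>+y. ennreal (prob X x y) \<partial>count_space (out X x))"
    by (subst nn_integral_count_space_indicator) (auto intro!: nn_integral_cong simp: indicator_def)
  also have "\<dots> = ennreal (\<Sum>y\<in>out X x. prob X x y)"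
    using pos by (simp add: nn_integral_count_space_finite[OF fin] sum_ennreal less_imp_le)
  finally have total: "(\<integral>\<^sup>+y. ennreal (if y \<in> out X x then prob X x y else 0) \<partial>count_space UNIV) = 1"
    using sum1 by simp
  have "step X \<sigma> \<tau> x = embed_pmf (\<lambda>y. if y \<in> out X x then prob X x y else 0)"
    using assms(2) by (auto simp: step_def)
  then show pmf_eq: "pmf (step X \<sigma> \<tau> x) y = (if y \<in> out X x then prob X x y else 0)" for y
    using pmf_embed_pmf[OF nonneg total] by simp
  show "set_pmf (step X \<sigma> \<tau> x) = out X x"
    using pos by (auto simp: set_pmf_eq pmf_eq)
qed

lemma step_expect_return:
  assumes "step X \<sigma> \<tau> x = return_pmf z" "z \<in> verts X" "finite (verts X)"
  shows "step_expect X \<sigma> \<tau> f x = f z"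
proof -
  have "step_expect X \<sigma> \<tau> f x = (\<Sum>y\<in>verts X. if y = z then f y else 0)"
    unfolding step_expect_def assms(1) by (intro sum.cong) (auto simp: indicator_def)
  also have "\<dots> = f z" using assms(2,3) by simp
  finally show ?thesis .
qed

lemma step_expect_max:
  "wf_game X \<Longrightarrow> is_max_strategy X \<sigma> \<Longrightarrow> x \<in> maxv X \<Longrightarrow> step_expect X \<sigma> \<tau> f x = f (\<sigma> x)"
  using wf_gameD(1,6)[of X] wf_game_arc_head[of X x "\<sigma> x"]
  by (intro step_expect_return) (auto simp: step_def is_max_strategy_def)

lemma step_expect_min:
  "wf_game X \<Longrightarrow> is_min_strategy X \<tau> \<Longrightarrow> x \<in> minv X \<Longrightarrow> step_expect X \<sigma> \<tau> f x = f (\<tau> x)"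
  using wf_gameD(1,7,8)[of X] wf_game_arc_head[of X x "\<tau> x"]
  by (intro step_expect_return) (auto simp: step_def is_min_strategy_def)

lemma step_expect_random:
  assumes "wf_game X" "x \<in> verts X - sinks X - maxv X - minv X"
  shows "step_expect X \<sigma> \<tau> f x = (\<Sum>y\<in>out X x. prob X x y * f y)"
proof -
  have "step_expect X \<sigma> \<tau> f x = (\<Sum>y\<in>verts X. if y \<in> out X x then prob X x y * f y else 0)"
    unfolding step_expect_def pmf_step_random[OF assms] by (intro sum.cong) auto
  also have "\<dots> = (\<Sum>y\<in>out X x. prob X x y * f y)"
    using out_subset_verts[OF assms(1)] wf_gameD(1)[OF assms(1)]
    by (simp add: sum.inter_restrict[symmetric] Int_absorb1)
  finally show ?thesis .
qed

lemma finite_chain_strategies: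
  assumes "wf_game X" "is_max_strategy X \<sigma>" "is_min_strategy X \<tau>"
  shows "finite_chain X \<sigma> \<tau>"
  unfolding finite_chain_def
proof (intro conjI ballI)
  fix x assume x: "x \<in> verts X"
  show "set_pmf (step X \<sigma> \<tau> x) \<subseteq> verts X"
  proof (cases "x \<in> verts X - sinks X - maxv X - minv X")
    case True
    then show ?thesis using set_pmf_step_random[OF assms(1) True] out_subset_verts[OF assms(1)] by simp
  next
    case False
    then show ?thesis using assms x wf_game_arc_head[OF assms(1), of x]
      by (auto simp: step_def is_max_strategy_def is_min_strategy_def)
  qed
qed (use wf_gameD(1,2)[OF assms(1)] in auto)

lemma step_cong:
  "(x \<in> maxv X \<Longrightarrow> \<sigma> x = \<sigma>' x) \<Longrightarrow> (x \<in> minv X \<Longrightarrow> \<tau> x = \<tau>' x) \<Longrightarrow>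
    step X \<sigma> \<tau> x = step X \<sigma>' \<tau>' x"
  by (simp add: step_def)

lemma step_expect_cong:
  "(x \<in> maxv X \<Longrightarrow> \<sigma> x = \<sigma>' x) \<Longrightarrow> (x \<in> minv X \<Longrightarrow> \<tau> x = \<tau>' x) \<Longrightarrow>
    step_expect X \<sigma> \<tau> f x = step_expect X \<sigma>' \<tau>' f x"
  unfolding step_expect_def by (metis step_cong)

lemma play_value_cong:
  assumes "\<forall>x\<in>maxv X. \<sigma> x = \<sigma>' x" "\<forall>x\<in>minv X. \<tau> x = \<tau>' x"
  shows "play_value X \<sigma> \<tau> = play_value X \<sigma>' \<tau>'"
proof -
  have "step X \<sigma> \<tau> = step X \<sigma>' \<tau>'" using assms by (intro ext step_cong) auto
  then have "state_dist X \<sigma> \<tau> n = state_dist X \<sigma>' \<tau>' n" for n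
    by (induction n) auto
  then show ?thesis unfolding play_value_def[abs_def] reach_prob_def by simp
qed

lemma wf_game_play_value_nonneg:
  "wf_game X \<Longrightarrow> is_max_strategy X \<sigma> \<Longrightarrow> is_min_strategy X \<tau> \<Longrightarrow> x \<in> verts X \<Longrightarrow>
    0 \<le> play_value X \<sigma> \<tau> x"
  using wf_gameD(11) by (intro play_value_nonneg finite_chain_strategies) auto

lemma play_value_mixed_le_min:
  assumes X: "wf_game X" and \<sigma>: "is_max_strategy X \<sigma>"
    and \<tau>: "is_min_strategy X \<tau>\<^sub>1" "is_min_strategy X \<tau>\<^sub>2"
    and nonneg: "\<forall>x\<in>verts X. 0 \<le> f\<^sub>1 x \<and> 0 \<le> f\<^sub>2 x"
    and sinks: "\<forall>s\<in>sinks X. sval X s \<le> f\<^sub>1 s \<and> sval X s \<le> f\<^sub>2 s"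
    and super\<^sub>1: "\<forall>x\<in>verts X - sinks X. step_expect X \<sigma> \<tau>\<^sub>1 (\<lambda>y. min (f\<^sub>1 y) (f\<^sub>2 y)) x \<le> f\<^sub>1 x"
    and super\<^sub>2: "\<forall>x\<in>verts X - sinks X. step_expect X \<sigma> \<tau>\<^sub>2 (\<lambda>y. min (f\<^sub>1 y) (f\<^sub>2 y)) x \<le> f\<^sub>2 x"
    and x: "x \<in> verts X"
  defines "\<tau> \<equiv> \<lambda>z. if f\<^sub>2 z < f\<^sub>1 z then \<tau>\<^sub>2 z else \<tau>\<^sub>1 z"
  shows "is_min_strategy X \<tau>" and "play_value X \<sigma> \<tau> x \<le> min (f\<^sub>1 x) (f\<^sub>2 x)"
proof -
  show \<tau>_min: "is_min_strategy X \<tau>" using \<tau> unfolding is_min_strategy_def \<tau>_def by auto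
  let ?v = "\<lambda>y. min (f\<^sub>1 y) (f\<^sub>2 y)"
  have "step_expect X \<sigma> \<tau> ?v z \<le> ?v z" if z: "z \<in> verts X - sinks X" for z
  proof (cases "z \<in> minv X \<and> f\<^sub>2 z < f\<^sub>1 z")
    case True
    then have "step_expect X \<sigma> \<tau> ?v z = step_expect X \<sigma> \<tau>\<^sub>2 ?v z"
      by (intro step_expect_cong) (auto simp: \<tau>_def)
    then show ?thesis using super\<^sub>2 z True by simp
  next
    case False
    then have \<tau>\<^sub>1_eq: "step_expect X \<sigma> \<tau> ?v z = step_expect X \<sigma> \<tau>\<^sub>1 ?v z"
      by (intro step_expect_cong) (auto simp: \<tau>_def)
    show ?thesis
    proof (cases "z \<in> minv X")
      case True
      then show ?thesis using \<tau>\<^sub>1_eq super\<^sub>1 z False by simp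
    next
      case False
      then have "step_expect X \<sigma> \<tau>\<^sub>1 ?v z = step_expect X \<sigma> \<tau>\<^sub>2 ?v z"
        by (intro step_expect_cong) auto
      then show ?thesis using \<tau>\<^sub>1_eq super\<^sub>1 super\<^sub>2 z by (metis min.bounded_iff)
    qed
  qed
  then show "play_value X \<sigma> \<tau> x \<le> ?v x"
    using nonneg sinks x
    by (intro play_value_le_superharmonic finite_chain_strategies[OF X \<sigma> \<tau>_min]) auto
qed

text \<open>A best response is found among the finitely many MIN strategies restricted to
  \<^term>\<open>minv X\<close>, as one minimising the sum of the values; mixing shows it is minimal pointwise.\<close>
lemma best_response_exists:
  assumes X: "wf_game X" and \<sigma>: "is_max_strategy X \<sigma>"
  shows "\<exists>\<tau>. is_best_response X \<sigma> \<tau>"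
proof -
  define T where "T = {\<tau> \<in> minv X \<rightarrow>\<^sub>E verts X. is_min_strategy X \<tau>}"
  have "finite (minv X \<rightarrow>\<^sub>E verts X)"
    using wf_gameD(1,4)[OF X] by (intro finite_PiE) (auto intro: finite_subset)
  then have T_finite: "finite T" unfolding T_def by (rule rev_finite_subset) blast
  have restrict_in_T: "restrict \<tau> (minv X) \<in> T" if "is_min_strategy X \<tau>" for \<tau>
    using that wf_game_arc_head[OF X] by (auto simp: T_def is_min_strategy_def)
  have "is_min_strategy X (\<lambda>x. SOME y. y \<in> out X x)"
    using wf_gameD(9)[OF X] by (auto simp: is_min_strategy_def out_def intro: someI_ex)
  then have "T \<noteq> {}" using restrict_in_T by blast
  define F where "F \<tau> = (\<Sum>x\<in>verts X. play_value X \<sigma> \<tau> x)" for \<tau>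
  have "Min (F ` T) \<in> F ` T" using T_finite \<open>T \<noteq> {}\<close> by (intro Min_in) auto
  then obtain \<tau>\<^sub>1 where \<tau>\<^sub>1_T: "\<tau>\<^sub>1 \<in> T" and "F \<tau>\<^sub>1 = Min (F ` T)" by auto
  then have \<tau>\<^sub>1_least: "\<forall>\<tau>\<in>T. F \<tau>\<^sub>1 \<le> F \<tau>" using T_finite by simp
  from \<tau>\<^sub>1_T have \<tau>\<^sub>1: "is_min_strategy X \<tau>\<^sub>1" by (simp add: T_def)
  have "play_value X \<sigma> \<tau>\<^sub>1 x \<le> play_value X \<sigma> \<tau>\<^sub>2 x"
    if \<tau>\<^sub>2: "is_min_strategy X \<tau>\<^sub>2" and x: "x \<in> verts X" for \<tau>\<^sub>2 x
  proof (rule ccontr)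
    assume not_le: "\<not> ?thesis"
    define p where "p \<tau> = play_value X \<sigma> \<tau>" for \<tau>
    define \<tau> where "\<tau> z = (if p \<tau>\<^sub>2 z < p \<tau>\<^sub>1 z then \<tau>\<^sub>2 z else \<tau>\<^sub>1 z)" for z
    have super: "\<forall>z\<in>verts X - sinks X. step_expect X \<sigma> \<tau>' (\<lambda>y. min (p \<tau>\<^sub>1 y) (p \<tau>\<^sub>2 y)) z \<le> p \<tau>' z"
      if "is_min_strategy X \<tau>'" "\<tau>' = \<tau>\<^sub>1 \<or> \<tau>' = \<tau>\<^sub>2" for \<tau>'
    proof
      fix z assume z: "z \<in> verts X - sinks X"
      have "step_expect X \<sigma> \<tau>' (\<lambda>y. min (p \<tau>\<^sub>1 y) (p \<tau>\<^sub>2 y)) z \<le> step_expect X \<sigma> \<tau>' (p \<tau>') z"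
        using that(2) by (intro step_expect_mono) auto
      also have "\<dots> = p \<tau>' z"
        unfolding p_def using play_value_step[OF finite_chain_strategies[OF X \<sigma> that(1)]] z by simp
      finally show "step_expect X \<sigma> \<tau>' (\<lambda>y. min (p \<tau>\<^sub>1 y) (p \<tau>\<^sub>2 y)) z \<le> p \<tau>' z" .
    qed
    have mixed: "is_min_strategy X \<tau>" "play_value X \<sigma> \<tau> z \<le> min (p \<tau>\<^sub>1 z) (p \<tau>\<^sub>2 z)"
      if "z \<in> verts X" for z
      unfolding \<tau>_def
      by (rule play_value_mixed_le_min[OF X \<sigma> \<tau>\<^sub>1 \<tau>\<^sub>2 _ _ super[OF \<tau>\<^sub>1] super[OF \<tau>\<^sub>2] that];
          use \<tau>\<^sub>1 \<tau>\<^sub>2 wf_game_play_value_nonneg[OF X \<sigma>]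
            play_value_sink[OF finite_chain_strategies[OF X \<sigma>]] in \<open>simp add: p_def\<close>)+
    have "F (restrict \<tau> (minv X)) = F \<tau>"
      unfolding F_def by (simp add: play_value_cong[of X \<sigma> \<sigma> "restrict \<tau> (minv X)" \<tau>])
    also have "F \<tau> < F \<tau>\<^sub>1"
      unfolding F_def using wf_gameD(1)[OF X] x mixed not_le
      by (intro sum_strict_mono_ex1) (force simp: p_def)+
    finally show False
      using \<tau>\<^sub>1_least restrict_in_T[OF mixed(1)[OF x]] by fastforce
  qed
  then show ?thesis using \<tau>\<^sub>1 unfolding is_best_response_def by blast
qed

text \<open>Local optimality of a best response: redirecting MIN at \<open>x\<close> to \<open>y\<close> would otherwise
  give a strategy whose value at \<open>x\<close> is bounded by the superharmonic function
  \<open>(play_value X \<sigma> \<tau>)(x := play_value X \<sigma> \<tau> y)\<close>.\<close>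
lemma best_response_le_succ:
  assumes X: "wf_game X" and \<sigma>: "is_max_strategy X \<sigma>" and br: "is_best_response X \<sigma> \<tau>"
    and x: "x \<in> minv X" and xy: "(x, y) \<in> arcs X"
  shows "play_value X \<sigma> \<tau> x \<le> play_value X \<sigma> \<tau> y"
proof (rule ccontr)
  assume "\<not> ?thesis"
  then have lt: "play_value X \<sigma> \<tau> y < play_value X \<sigma> \<tau> x" by simp
  have \<tau>: "is_min_strategy X \<tau>" using br by (simp add: is_best_response_def)
  define \<tau>' where "\<tau>' = \<tau>(x := y)"
  have \<tau>': "is_min_strategy X \<tau>'" using \<tau> xy unfolding is_min_strategy_def \<tau>'_def by auto
  define w where "w = play_value X \<sigma> \<tau>"
  define v where "v = w(x := w y)"
  have chain: "finite_chain X \<sigma> \<tau>" by (rule finite_chain_strategies[OF X \<sigma> \<tau>])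
  have x_verts: "x \<in> verts X" and x_sink: "x \<notin> sinks X" and y_verts: "y \<in> verts X"
    using wf_gameD(4,7)[OF X] x wf_game_arc_head[OF X xy] by auto
  have "play_value X \<sigma> \<tau>' x \<le> v x"
  proof (rule play_value_le_superharmonic[OF finite_chain_strategies[OF X \<sigma> \<tau>'] _ _ _ x_verts])
    show "\<forall>z\<in>verts X. 0 \<le> v z"
      unfolding v_def w_def using wf_game_play_value_nonneg[OF X \<sigma> \<tau>] y_verts by auto
    show "\<forall>s\<in>sinks X. sval X s \<le> v s"
      unfolding v_def w_def using play_value_sink[OF chain] x_sink by auto
    show "\<forall>z\<in>verts X - sinks X. step_expect X \<sigma> \<tau>' v z \<le> v z"
    proof
      fix z assume z: "z \<in> verts X - sinks X"
      show "step_expect X \<sigma> \<tau>' v z \<le> v z"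
      proof (cases "z = x")
        case True
        then show ?thesis using step_expect_min[OF X \<tau>' x] lt by (simp add: \<tau>'_def v_def)
      next
        case False
        have "step_expect X \<sigma> \<tau>' v z \<le> step_expect X \<sigma> \<tau>' w z"
          using lt by (intro step_expect_mono) (simp add: v_def w_def)
        also have "\<dots> = step_expect X \<sigma> \<tau> w z"
          using False by (intro step_expect_cong) (auto simp: \<tau>'_def)
        also have "\<dots> = w z" unfolding w_def using play_value_step[OF chain] z by simp
        finally show ?thesis using False by (simp add: v_def)
      qed
    qed
  qed
  moreover have "play_value X \<sigma> \<tau> x \<le> play_value X \<sigma> \<tau>' x"
    using br \<tau>' x_verts by (auto simp: is_best_response_def)
  ultimately show False using lt by (simp add: v_def w_def)
qed

lemma max_value_best_response:
  assumes "wf_game X" "is_max_strategy X \<sigma>"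
  obtains \<tau> where "is_best_response X \<sigma> \<tau>" "max_value X \<sigma> = play_value X \<sigma> \<tau>"
proof
  show "is_best_response X \<sigma> (SOME \<tau>. is_best_response X \<sigma> \<tau>)"
    using best_response_exists[OF assms] by (rule someI_ex)
qed (simp add: max_value_def[abs_def])

context
  fixes X :: "('v, 'b) ssg_scheme" and \<sigma> :: "'v \<Rightarrow> 'v"
  assumes X: "wf_game X" and \<sigma>: "is_max_strategy X \<sigma>"
begin

lemma max_value_le_play_value:
  "is_min_strategy X \<tau> \<Longrightarrow> x \<in> verts X \<Longrightarrow> max_value X \<sigma> x \<le> play_value X \<sigma> \<tau> x"
  by (rule max_value_best_response[OF X \<sigma>]) (simp add: is_best_response_def)

lemma max_value_sink: "s \<in> sinks X \<Longrightarrow> max_value X \<sigma> s = sval X s"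
  by (rule max_value_best_response[OF X \<sigma>])
    (simp add: is_best_response_def play_value_sink finite_chain_strategies[OF X \<sigma>])

lemma max_value_nonneg: "x \<in> verts X \<Longrightarrow> 0 \<le> max_value X \<sigma> x"
  by (rule max_value_best_response[OF X \<sigma>])
    (simp add: is_best_response_def wf_game_play_value_nonneg[OF X \<sigma>])

lemma max_value_le_succ: "x \<in> minv X \<Longrightarrow> (x, y) \<in> arcs X \<Longrightarrow> max_value X \<sigma> x \<le> max_value X \<sigma> y"
  by (rule max_value_best_response[OF X \<sigma>]) (simp add: best_response_le_succ[OF X \<sigma>])

lemma max_value_step:
  assumes "is_min_strategy X \<tau>" "x \<in> verts X - minv X"
  shows "max_value X \<sigma> x = step_expect X \<sigma> \<tau> (max_value X \<sigma>) x"
proof (rule max_value_best_response[OF X \<sigma>])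
  fix \<tau>' assume br: "is_best_response X \<sigma> \<tau>'" and eq: "max_value X \<sigma> = play_value X \<sigma> \<tau>'"
  have "play_value X \<sigma> \<tau>' x = step_expect X \<sigma> \<tau>' (play_value X \<sigma> \<tau>') x"
    using br assms(2)
    by (intro play_value_step finite_chain_strategies[OF X \<sigma>]) (auto simp: is_best_response_def)
  also have "\<dots> = step_expect X \<sigma> \<tau> (play_value X \<sigma> \<tau>') x"
    using assms(2) by (intro step_expect_cong) auto
  finally show ?thesis unfolding eq .
qed

end

section \<open>The transformed game\<close>

text \<open>The head of the arc \<open>(x, y)\<close> in \<open>G[A,\<sigma>]\<close>.\<close>
definition redirect :: "('v \<times> 'v) set \<Rightarrow> 'v \<Rightarrow> 'v \<Rightarrow> 'v + 'v \<times> 'v" where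
  "redirect A x y = (if (x, y) \<in> A then Inr (x, y) else Inl y)"

lemma redirect_eq_iff [simp]: "redirect A x y = redirect A x y' \<longleftrightarrow> y = y'"
  by (auto simp: redirect_def)

lemma lift_strategy_Inl [simp]: "lift_strategy A \<tau> (Inl x) = redirect A x (\<tau> x)"
  by (simp add: lift_strategy_def redirect_def)

lemma Inl_in_image_Inl [simp]: "Inl x \<in> Inl ` S \<longleftrightarrow> x \<in> S"
  by auto

lemma Inl_notin_image_Inr [simp]: "Inl x \<notin> Inr ` S"
  by auto

lemma transform_simps [simp]:
  "verts (transform G A \<sigma>) = Inl ` verts G \<union> Inr ` A"
  "maxv (transform G A \<sigma>) = Inl ` maxv G"
  "minv (transform G A \<sigma>) = Inl ` minv G"
  "sinks (transform G A \<sigma>) = Inl ` sinks G \<union> Inr ` A"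
  "sval (transform G A \<sigma>) (Inl s) = sval G s"
  "sval (transform G A \<sigma>) (Inr (x, y)) = max_value G \<sigma> y"
  "prob (transform G A \<sigma>) (Inl x) (redirect A x y) = prob G x y"
  by (auto simp: transform_def redirect_def)

lemma arcs_transform:
  "arcs (transform G A \<sigma>) = {(Inl x, Inl y) | x y. (x, y) \<in> arcs G - A}
     \<union> {(Inl x, Inr (x, y)) | x y. (x, y) \<in> A} \<union> {(Inr e, Inr e) | e. e \<in> A}"
  by (simp add: transform_def)

lemma out_transform: "A \<subseteq> arcs G \<Longrightarrow> out (transform G A \<sigma>) (Inl x) = redirect A x ` out G x"
  unfolding out_def arcs_transform redirect_def by (auto split: if_splits)

lemma redirect_arc_transform:
  "A \<subseteq> arcs G \<Longrightarrow> (x, y) \<in> arcs G \<Longrightarrow> (Inl x, redirect A x y) \<in> arcs (transform G A \<sigma>)"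
  unfolding arcs_transform redirect_def by auto

lemma
  assumes "A \<subseteq> arcs G"
  shows is_max_strategy_lift:
      "is_max_strategy G \<sigma>' \<Longrightarrow> is_max_strategy (transform G A \<sigma>) (lift_strategy A \<sigma>')"
    and is_min_strategy_lift:
      "is_min_strategy G \<tau> \<Longrightarrow> is_min_strategy (transform G A \<sigma>) (lift_strategy A \<tau>)"
  using assms unfolding is_max_strategy_def is_min_strategy_def
  by (auto intro!: redirect_arc_transform)

locale transformed_game =
  fixes G :: "'v ssg" and A :: "('v \<times> 'v) set" and \<sigma> :: "'v \<Rightarrow> 'v"
  assumes ssg: "ssg G" and A_arcs: "A \<subseteq> arcs G" and \<sigma>: "is_max_strategy G \<sigma>"
begin

abbreviation H :: "('v + 'v \<times> 'v) ssg" where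
  "H \<equiv> transform G A \<sigma>"

lemma wf_G: "wf_game G"
  using ssg by (rule ssg_wf_game)

lemma A_verts: "A \<subseteq> verts G \<times> verts G"
  using A_arcs wf_gameD(5)[OF wf_G] by blast

lemma sum_out_transform:
  "(\<Sum>z\<in>out H (Inl x). prob H (Inl x) z * f z) = (\<Sum>y\<in>out G x. prob G x y * f (redirect A x y))"
proof -
  have "inj_on (redirect A x) (out G x)" by (simp add: inj_on_def)
  then show ?thesis unfolding out_transform[OF A_arcs] by (simp add: sum.reindex)
qed

lemma wf_H: "wf_game H"
  unfolding wf_game_def
proof (intro conjI)
  have "finite A" using A_verts wf_gameD(1)[OF wf_G] finite_subset by blast
  then show "finite (verts H)" using wf_gameD(1)[OF wf_G] by simp
  show "arcs H \<subseteq> verts H \<times> verts H"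
    unfolding arcs_transform using wf_gameD(5)[OF wf_G] A_arcs by fastforce
  show "\<forall>x\<in>minv H. out H x \<noteq> {}"
    using wf_gameD(9)[OF wf_G] by (auto simp: out_transform[OF A_arcs])
  show "\<forall>s\<in>sinks H. 0 \<le> sval H s"
    using wf_gameD(11)[OF wf_G] max_value_nonneg[OF wf_G \<sigma>] A_verts by auto
  show "\<forall>z\<in>verts H - sinks H - maxv H - minv H.
      (\<forall>y\<in>out H z. 0 < prob H z y) \<and> (\<Sum>y\<in>out H z. prob H z y) = 1"
  proof
    fix z assume "z \<in> verts H - sinks H - maxv H - minv H"
    then obtain x where z: "z = Inl x" and x: "x \<in> verts G - sinks G - maxv G - minv G"
      by auto
    then show "(\<forall>y\<in>out H z. 0 < prob H z y) \<and> (\<Sum>y\<in>out H z. prob H z y) = 1"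
      using wf_gameD(10)[OF wf_G] sum_out_transform[of x "\<lambda>_. 1"]
      by (auto simp: out_transform[OF A_arcs])
  qed
qed (use wf_gameD(2-4,6-8)[OF wf_G] in auto)

lemma
  assumes "is_max_strategy G \<sigma>'" "is_min_strategy G \<tau>" "x \<in> verts G - sinks G"
  shows step_expect_transform: "step_expect H (lift_strategy A \<sigma>') (lift_strategy A \<tau>) f (Inl x)
      = step_expect G \<sigma>' \<tau> (\<lambda>y. f (redirect A x y)) x"
    and set_pmf_step_transform: "set_pmf (step H (lift_strategy A \<sigma>') (lift_strategy A \<tau>) (Inl x))
      = redirect A x ` set_pmf (step G \<sigma>' \<tau> x)"
proof -
  note \<sigma>' = is_max_strategy_lift[OF A_arcs assms(1)] and \<tau> = is_min_strategy_lift[OF A_arcs assms(2)]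
  consider "x \<in> maxv G" | "x \<in> minv G" | "x \<in> verts G - sinks G - maxv G - minv G"
    using assms(3) by blast
  then have "step_expect H (lift_strategy A \<sigma>') (lift_strategy A \<tau>) f (Inl x)
      = step_expect G \<sigma>' \<tau> (\<lambda>y. f (redirect A x y)) x \<and>
    set_pmf (step H (lift_strategy A \<sigma>') (lift_strategy A \<tau>) (Inl x))
      = redirect A x ` set_pmf (step G \<sigma>' \<tau> x)"
  proof cases
    case 1
    then show ?thesis
      using step_expect_max[OF wf_H \<sigma>'] step_expect_max[OF wf_G assms(1)] wf_gameD(6)[OF wf_G]
      by (auto simp: step_def)
  next
    case 2
    then show ?thesis
      using step_expect_min[OF wf_H \<tau>] step_expect_min[OF wf_G assms(2)] wf_gameD(7,8)[OF wf_G]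
      by (auto simp: step_def)
  next
    case 3
    then have r: "Inl x \<in> verts H - sinks H - maxv H - minv H" by auto
    have "step_expect H (lift_strategy A \<sigma>') (lift_strategy A \<tau>) f (Inl x)
        = (\<Sum>z\<in>out H (Inl x). prob H (Inl x) z * f z)"
      by (rule step_expect_random[OF wf_H r])
    also have "\<dots> = step_expect G \<sigma>' \<tau> (\<lambda>y. f (redirect A x y)) x"
      unfolding sum_out_transform by (rule step_expect_random[OF wf_G 3, symmetric])
    moreover have "set_pmf (step H (lift_strategy A \<sigma>') (lift_strategy A \<tau>) (Inl x))
        = redirect A x ` set_pmf (step G \<sigma>' \<tau> x)"
      unfolding set_pmf_step_random[OF wf_H r] set_pmf_step_random[OF wf_G 3]
      by (rule out_transform[OF A_arcs])
    ultimately show ?thesis by simp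
  qed
  then show "step_expect H (lift_strategy A \<sigma>') (lift_strategy A \<tau>) f (Inl x)
      = step_expect G \<sigma>' \<tau> (\<lambda>y. f (redirect A x y)) x"
    and "set_pmf (step H (lift_strategy A \<sigma>') (lift_strategy A \<tau>) (Inl x))
      = redirect A x ` set_pmf (step G \<sigma>' \<tau> x)" by auto
qed

lemma lift_strategy_surj:
  assumes "is_min_strategy H \<tau>'"
  obtains \<tau> where "is_min_strategy G \<tau>" "\<forall>z\<in>minv H. lift_strategy A \<tau> z = \<tau>' z"
proof
  define \<tau> where "\<tau> x = (case \<tau>' (Inl x) of Inl y \<Rightarrow> y | Inr e \<Rightarrow> snd e)" for x
  have *: "(x, \<tau> x) \<in> arcs G \<and> redirect A x (\<tau> x) = \<tau>' (Inl x)" if x: "x \<in> minv G" for x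
  proof -
    have "(Inl x, \<tau>' (Inl x)) \<in> arcs H" using assms x by (auto simp: is_min_strategy_def)
    then show ?thesis unfolding arcs_transform \<tau>_def redirect_def using A_arcs by auto
  qed
  show "is_min_strategy G \<tau>" using * by (auto simp: is_min_strategy_def)
  show "\<forall>z\<in>minv H. lift_strategy A \<tau> z = \<tau>' z" using * by auto
qed

lemma max_value_transform_lifted:
  assumes "is_max_strategy G \<sigma>'"
  obtains \<tau> where "is_min_strategy G \<tau>"
    "max_value H (lift_strategy A \<sigma>') = play_value H (lift_strategy A \<sigma>') (lift_strategy A \<tau>)"
proof -
  obtain \<tau>' where "is_best_response H (lift_strategy A \<sigma>') \<tau>'"
    and eq: "max_value H (lift_strategy A \<sigma>') = play_value H (lift_strategy A \<sigma>') \<tau>'"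
    using max_value_best_response[OF wf_H is_max_strategy_lift[OF A_arcs assms]] .
  then obtain \<tau> where "is_min_strategy G \<tau>" "\<forall>z\<in>minv H. lift_strategy A \<tau> z = \<tau>' z"
    using lift_strategy_surj by (auto simp: is_best_response_def)
  with eq show ?thesis using that play_value_cong[of H] by metis
qed

lemma
  assumes "is_max_strategy G \<sigma>'"
  shows max_value_transform_sink: "s \<in> sinks G \<Longrightarrow> max_value H (lift_strategy A \<sigma>') (Inl s) = sval G s"
    and max_value_transform_redirected:
      "(x, y) \<in> A \<Longrightarrow> max_value H (lift_strategy A \<sigma>') (Inr (x, y)) = max_value G \<sigma> y"
  using max_value_sink[OF wf_H is_max_strategy_lift[OF A_arcs assms]] by auto

lemma max_value_le_transform:
  assumes x: "x \<in> verts G"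
  shows "max_value G \<sigma> x \<le> max_value H (lift_strategy A \<sigma>) (Inl x)"
proof -
  let ?u = "max_value G \<sigma>" and ?uH = "max_value H (lift_strategy A \<sigma>)"
  note \<sigma>\<^sub>H = is_max_strategy_lift[OF A_arcs \<sigma>]
  obtain \<tau>\<^sub>1 where "is_best_response G \<sigma> \<tau>\<^sub>1" and u: "?u = play_value G \<sigma> \<tau>\<^sub>1"
    using max_value_best_response[OF wf_G \<sigma>] .
  then have \<tau>\<^sub>1: "is_min_strategy G \<tau>\<^sub>1" by (simp add: is_best_response_def)
  obtain \<tau>\<^sub>2 where \<tau>\<^sub>2: "is_min_strategy G \<tau>\<^sub>2"
    and uH: "?uH = play_value H (lift_strategy A \<sigma>) (lift_strategy A \<tau>\<^sub>2)"
    using max_value_transform_lifted[OF \<sigma>] .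
  let ?v = "\<lambda>y. min (?u y) (?uH (Inl y))"
  have super\<^sub>1: "step_expect G \<sigma> \<tau>\<^sub>1 ?v z \<le> ?u z" if "z \<in> verts G" for z
  proof -
    have "step_expect G \<sigma> \<tau>\<^sub>1 ?v z \<le> step_expect G \<sigma> \<tau>\<^sub>1 ?u z" by (rule step_expect_mono) simp
    also have "\<dots> = ?u z"
      unfolding u using play_value_step[OF finite_chain_strategies[OF wf_G \<sigma> \<tau>\<^sub>1] that] by simp
    finally show ?thesis .
  qed
  have super\<^sub>2: "step_expect G \<sigma> \<tau>\<^sub>2 ?v z \<le> ?uH (Inl z)" if "z \<in> verts G - sinks G" for z
  proof -
    have "step_expect G \<sigma> \<tau>\<^sub>2 ?v z \<le> step_expect G \<sigma> \<tau>\<^sub>2 (\<lambda>y. ?uH (redirect A z y)) z"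
      by (rule step_expect_mono) (simp add: redirect_def max_value_transform_redirected[OF \<sigma>])
    also have "\<dots> = step_expect H (lift_strategy A \<sigma>) (lift_strategy A \<tau>\<^sub>2) ?uH (Inl z)"
      by (rule step_expect_transform[OF \<sigma> \<tau>\<^sub>2 that, symmetric])
    also have "\<dots> = ?uH (Inl z)"
      unfolding uH using that
      by (intro play_value_step[symmetric] finite_chain_strategies[OF wf_H \<sigma>\<^sub>H]
          is_min_strategy_lift[OF A_arcs \<tau>\<^sub>2]) auto
    finally show ?thesis .
  qed
  obtain \<tau> where "is_min_strategy G \<tau>" "play_value G \<sigma> \<tau> x \<le> ?v x"
    using play_value_mixed_le_min[OF wf_G \<sigma> \<tau>\<^sub>1 \<tau>\<^sub>2, of ?u "\<lambda>y. ?uH (Inl y)"] super\<^sub>1 super\<^sub>2 x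
      max_value_nonneg[OF wf_G \<sigma>] max_value_nonneg[OF wf_H \<sigma>\<^sub>H]
      max_value_sink[OF wf_G \<sigma>] max_value_transform_sink[OF \<sigma>]
    by auto
  then show ?thesis using max_value_le_play_value[OF wf_G \<sigma>, of \<tau> x] x by simp
qed

lemma max_value_transform_le_step:
  assumes \<sigma>': "is_max_strategy G \<sigma>'" and \<tau>: "is_min_strategy G \<tau>" and x: "x \<in> verts G - sinks G"
  shows "max_value H (lift_strategy A \<sigma>') (Inl x)
    \<le> step_expect G \<sigma>' \<tau> (\<lambda>y. max_value H (lift_strategy A \<sigma>') (redirect A x y)) x"
proof (cases "x \<in> minv G")
  case True
  then have "(x, \<tau> x) \<in> arcs G" using \<tau> by (simp add: is_min_strategy_def)
  then have "max_value H (lift_strategy A \<sigma>') (Inl x)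
      \<le> max_value H (lift_strategy A \<sigma>') (redirect A x (\<tau> x))"
    using True by (intro max_value_le_succ[OF wf_H is_max_strategy_lift[OF A_arcs \<sigma>']]
        redirect_arc_transform[OF A_arcs]) auto
  then show ?thesis using step_expect_min[OF wf_G \<tau> True] by simp
next
  case False
  then have "max_value H (lift_strategy A \<sigma>') (Inl x) = step_expect H (lift_strategy A \<sigma>')
      (lift_strategy A \<tau>) (max_value H (lift_strategy A \<sigma>')) (Inl x)"
    using x by (intro max_value_step[OF wf_H is_max_strategy_lift[OF A_arcs \<sigma>']]
        is_min_strategy_lift[OF A_arcs \<tau>]) auto
  then show ?thesis using step_expect_transform[OF \<sigma>' \<tau> x] by simp
qed

lemma max_value_transform_trap:
  assumes \<sigma>': "is_max_strategy G \<sigma>'" and \<tau>: "is_min_strategy G \<tau>" and S: "S \<subseteq> verts G - sinks G"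
    and closed: "\<forall>x\<in>S. \<forall>y\<in>set_pmf (step G \<sigma>' \<tau> x). y \<in> S \<and> (x, y) \<notin> A" and x: "x \<in> S"
  shows "max_value H (lift_strategy A \<sigma>') (Inl x) = 0"
proof (rule antisym)
  note \<sigma>\<^sub>H = is_max_strategy_lift[OF A_arcs \<sigma>'] and \<tau>\<^sub>H = is_min_strategy_lift[OF A_arcs \<tau>]
  have closed\<^sub>H: "\<forall>z\<in>Inl ` S. set_pmf (step H (lift_strategy A \<sigma>') (lift_strategy A \<tau>) z) \<subseteq> Inl ` S"
  proof
    fix z :: "'v + 'v \<times> 'v" assume "z \<in> Inl ` S"
    then obtain y where z: "z = Inl y" and y: "y \<in> S" by blast
    have "y \<in> verts G - sinks G" using S y by blast
    show "set_pmf (step H (lift_strategy A \<sigma>') (lift_strategy A \<tau>) z) \<subseteq> Inl ` S"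
      unfolding z set_pmf_step_transform[OF \<sigma>' \<tau> \<open>y \<in> verts G - sinks G\<close>]
      using closed y by (auto simp: redirect_def)
  qed
  have "play_value H (lift_strategy A \<sigma>') (lift_strategy A \<tau>) (Inl x) = 0"
    by (rule play_value_closed_nonsinks[OF finite_chain_strategies[OF wf_H \<sigma>\<^sub>H \<tau>\<^sub>H] _ closed\<^sub>H])
      (use S x in auto)
  then show "max_value H (lift_strategy A \<sigma>') (Inl x) \<le> 0"
    using max_value_le_play_value[OF wf_H \<sigma>\<^sub>H \<tau>\<^sub>H] S x by force
  show "0 \<le> max_value H (lift_strategy A \<sigma>') (Inl x)"
    using max_value_nonneg[OF wf_H \<sigma>\<^sub>H] S x by force
qed

end

locale improving_switch = transformed_game +
  fixes \<sigma>'
  assumes \<sigma>': "is_max_strategy G \<sigma>'"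
    and improves: "\<forall>x\<in>verts G.
      max_value H (lift_strategy A \<sigma>) (Inl x) \<le> max_value H (lift_strategy A \<sigma>') (Inl x)"
    and switch_only_if_improving: "\<forall>x\<in>maxv G.
      max_value H (lift_strategy A \<sigma>') (Inl x) = max_value H (lift_strategy A \<sigma>) (Inl x) \<longrightarrow> \<sigma>' x = \<sigma> x"
begin

lemma max_value_le_transform_improved:
  "x \<in> verts G \<Longrightarrow> max_value G \<sigma> x \<le> max_value H (lift_strategy A \<sigma>') (Inl x)"
  using max_value_le_transform improves order_trans by blast

lemma max_value_transform_subharmonic:
  assumes \<tau>: "is_min_strategy G \<tau>" and x: "x \<in> verts G - sinks G"
  shows "max_value H (lift_strategy A \<sigma>') (Inl x)
    \<le> step_expect G \<sigma>' \<tau> (\<lambda>y. max_value H (lift_strategy A \<sigma>') (Inl y)) x"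
proof -
  have "max_value H (lift_strategy A \<sigma>') (redirect A x y) \<le> max_value H (lift_strategy A \<sigma>') (Inl y)"
    if "y \<in> verts G" for y
    using max_value_le_transform_improved[OF that] max_value_transform_redirected[OF \<sigma>']
    by (simp add: redirect_def)
  then show ?thesis
    using max_value_transform_le_step[OF \<sigma>' \<tau> x] step_expect_mono order_trans by meson
qed

text \<open>Where \<open>max_value G \<sigma> = D\<close> on \<open>S\<close>, the chain \<open>max_value_le_transform\<close>, \<open>improves\<close> is
  squeezed to equalities, so \<open>\<sigma>\<close> agrees with \<open>\<sigma>'\<close> there. Hence this level set is closed for \<open>\<sigma>\<close>
  as well and the play never leaves it.\<close>
lemma max_value_vanishes_on_plateau:
  assumes \<tau>: "is_min_strategy G \<tau>" and S: "S \<subseteq> verts G - sinks G"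
    and closed: "\<forall>z\<in>S. set_pmf (step G \<sigma>' \<tau> z) \<subseteq> S"
    and plateau: "\<forall>z\<in>S. max_value H (lift_strategy A \<sigma>') (Inl z) = D"
    and y: "y \<in> S" "max_value G \<sigma> y = D"
  shows "max_value G \<sigma> y = 0"
proof -
  let ?u = "max_value G \<sigma>"
  define R where "R = {z\<in>S. ?u z = D}"
  have chain: "finite_chain G \<sigma> \<tau>" by (rule finite_chain_strategies[OF wf_G \<sigma> \<tau>])
  have u_le: "?u z \<le> D" if "z \<in> S" for z
    using max_value_le_transform_improved[of z] plateau that S by auto
  have "set_pmf (step G \<sigma> \<tau> z) \<subseteq> R" if z: "z \<in> R" for z
  proof
    fix w assume w: "w \<in> set_pmf (step G \<sigma> \<tau> z)"
    have zS: "z \<in> S" and uz: "?u z = D" and zV: "z \<in> verts G - sinks G" using z S by (auto simp: R_def)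
    have "step G \<sigma> \<tau> z = step G \<sigma>' \<tau> z"
    proof (rule step_cong)
      assume "z \<in> maxv G"
      moreover have "max_value H (lift_strategy A \<sigma>') (Inl z) = max_value H (lift_strategy A \<sigma>) (Inl z)"
        using max_value_le_transform[of z] improves plateau zS zV uz by force
      ultimately show "\<sigma> z = \<sigma>' z" using switch_only_if_improving by simp
    qed simp
    then have supp: "set_pmf (step G \<sigma> \<tau> z) \<subseteq> S" using closed zS by simp
    have "D \<le> step_expect G \<sigma> \<tau> ?u z"
    proof (cases "z \<in> minv G")
      case True
      then have "(z, \<tau> z) \<in> arcs G" using \<tau> by (simp add: is_min_strategy_def)
      then show ?thesis
        using max_value_le_succ[OF wf_G \<sigma> True] step_expect_min[OF wf_G \<tau> True] uz by simp
    next
      case False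
      then show ?thesis using max_value_step[OF wf_G \<sigma> \<tau>, of z] zV uz by simp
    qed
    then have "?u w = D"
      using step_expect_ge_bound_support[OF chain _ _ _ w, where D = D] zV supp u_le by blast
    then show "w \<in> R" using supp w by (auto simp: R_def)
  qed
  then have "play_value G \<sigma> \<tau> y = 0"
    using S y by (intro play_value_closed_nonsinks[OF chain, of R]) (auto simp: R_def)
  then show ?thesis
    using max_value_le_play_value[OF wf_G \<sigma> \<tau>] max_value_nonneg[OF wf_G \<sigma>] S y
    by (metis Diff_iff antisym subsetD)
qed

text \<open>The maximum principle for the excess of the value of \<open>\<sigma>'\<close> in \<open>G[A,\<sigma>]\<close> over its value
  in \<open>G\<close>: the excess is subharmonic for \<open>(\<sigma>', \<tau>)\<close> when \<open>\<tau>\<close> realises the value of \<open>\<sigma>'\<close>,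
  and it vanishes at sinks.\<close>
lemma excess_max_closed:
  assumes \<tau>: "is_min_strategy G \<tau>" and g: "max_value G \<sigma>' = play_value G \<sigma>' \<tau>"
  defines "d \<equiv> \<lambda>y. max_value H (lift_strategy A \<sigma>') (Inl y) - max_value G \<sigma>' y"
  assumes bound: "\<forall>y\<in>verts G. d y \<le> D" and D: "0 < D" and z: "z \<in> verts G" "d z = D"
  shows "z \<notin> sinks G" and "\<forall>y\<in>set_pmf (step G \<sigma>' \<tau> z). y \<in> verts G \<and> d y = D"
proof -
  have chain: "finite_chain G \<sigma>' \<tau>" by (rule finite_chain_strategies[OF wf_G \<sigma>' \<tau>])
  show z_sink: "z \<notin> sinks G"
    using z D max_value_transform_sink[OF \<sigma>'] max_value_sink[OF wf_G \<sigma>'] by (auto simp: d_def)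
  have "D \<le> step_expect G \<sigma>' \<tau> (\<lambda>y. max_value H (lift_strategy A \<sigma>') (Inl y)) z
      - step_expect G \<sigma>' \<tau> (max_value G \<sigma>') z"
    using max_value_transform_subharmonic[OF \<tau>, of z] play_value_step[OF chain z(1)] z z_sink
    by (simp add: d_def g)
  then have "D \<le> step_expect G \<sigma>' \<tau> d z" unfolding d_def step_expect_diff .
  then show "\<forall>y\<in>set_pmf (step G \<sigma>' \<tau> z). y \<in> verts G \<and> d y = D"
    using step_expect_ge_bound_support[OF chain z(1), of d D] finite_chainD(4)[OF chain z(1)] bound
    by blast
qed

text \<open>An arc of \<open>A\<close> leaving the plateau would lead to a new sink of value \<open>D\<close>, i.e. to some
  \<open>y \<in> S\<close> with \<open>max_value G \<sigma> y = D > 0\<close>.\<close>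
lemma excess_plateau_avoids_A:
  assumes \<tau>: "is_min_strategy G \<tau>" and S: "S \<subseteq> verts G - sinks G"
    and closed: "\<forall>z\<in>S. set_pmf (step G \<sigma>' \<tau> z) \<subseteq> S"
    and plateau: "\<forall>z\<in>S. max_value H (lift_strategy A \<sigma>') (Inl z) = D" and D: "0 < D"
    and z: "z \<in> S" and y: "y \<in> set_pmf (step G \<sigma>' \<tau> z)"
  shows "(z, y) \<notin> A"
proof
  assume zy: "(z, y) \<in> A"
  have chain: "finite_chain G \<sigma>' \<tau>" by (rule finite_chain_strategies[OF wf_G \<sigma>' \<tau>])
  have zV: "z \<in> verts G - sinks G" using z S by blast
  have "max_value H (lift_strategy A \<sigma>') (redirect A z y) = D"
  proof (rule step_expect_ge_bound_support[OF chain _ _ _ y])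
    show "z \<in> verts G" using zV by simp
    show "\<forall>y'\<in>set_pmf (step G \<sigma>' \<tau> z). max_value H (lift_strategy A \<sigma>') (redirect A z y') \<le> D"
    proof
      fix y' assume "y' \<in> set_pmf (step G \<sigma>' \<tau> z)"
      then have "y' \<in> S" using closed z by blast
      then have "y' \<in> verts G" "max_value H (lift_strategy A \<sigma>') (Inl y') = D" using plateau S by auto
      then show "max_value H (lift_strategy A \<sigma>') (redirect A z y') \<le> D"
        using max_value_le_transform_improved max_value_transform_redirected[OF \<sigma>', of z y']
        by (cases "(z, y') \<in> A") (auto simp: redirect_def)
    qed
    show "D \<le> step_expect G \<sigma>' \<tau> (\<lambda>y. max_value H (lift_strategy A \<sigma>') (redirect A z y)) z"
      using max_value_transform_le_step[OF \<sigma>' \<tau> zV] plateau z by simp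
  qed
  then have "max_value G \<sigma> y = D"
    using max_value_transform_redirected[OF \<sigma>' zy] by (simp add: redirect_def zy)
  moreover have "y \<in> S" using closed z y by blast
  ultimately have "max_value G \<sigma> y = 0"
    by (rule max_value_vanishes_on_plateau[OF \<tau> S closed plateau, rotated])
  with \<open>max_value G \<sigma> y = D\<close> D show False by simp
qed

lemma max_value_transform_le:
  assumes x: "x \<in> verts G"
  shows "max_value H (lift_strategy A \<sigma>') (Inl x) \<le> max_value G \<sigma>' x"
proof (rule ccontr)
  let ?w = "\<lambda>y. max_value H (lift_strategy A \<sigma>') (Inl y)"
  define d where "d y = ?w y - max_value G \<sigma>' y" for y
  define D where "D = Max (d ` verts G)"
  define S where "S = {y\<in>verts G. d y = D}"
  assume excess_at_x: "\<not> ?thesis"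
  have fin: "finite (verts G)" by (rule wf_gameD(1)[OF wf_G])
  have bound: "\<forall>y\<in>verts G. d y \<le> D" unfolding D_def using fin by simp
  have D: "0 < D" using bound x excess_at_x by (force simp: d_def)
  have "D \<in> d ` verts G" unfolding D_def using fin x by (intro Max_in) auto
  then obtain x\<^sub>0 where x\<^sub>0: "x\<^sub>0 \<in> S" unfolding S_def by auto
  obtain \<tau> where "is_best_response G \<sigma>' \<tau>" and g: "max_value G \<sigma>' = play_value G \<sigma>' \<tau>"
    using max_value_best_response[OF wf_G \<sigma>'] .
  then have \<tau>: "is_min_strategy G \<tau>" by (simp add: is_best_response_def)
  note excess = excess_max_closed[OF \<tau> g bound[unfolded d_def] D]
  have S_nonsinks: "S \<subseteq> verts G - sinks G" and closed: "\<forall>z\<in>S. set_pmf (step G \<sigma>' \<tau> z) \<subseteq> S"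
    using excess unfolding S_def d_def by blast+
  have plateau: "\<forall>z\<in>S. ?w z = D"
  proof
    fix z assume z: "z \<in> S"
    have "play_value G \<sigma>' \<tau> z = 0"
      by (rule play_value_closed_nonsinks[OF finite_chain_strategies[OF wf_G \<sigma>' \<tau>] S_nonsinks closed z])
    then show "?w z = D" using z unfolding S_def d_def g by simp
  qed
  have "\<forall>z\<in>S. \<forall>y\<in>set_pmf (step G \<sigma>' \<tau> z). y \<in> S \<and> (z, y) \<notin> A"
    using closed excess_plateau_avoids_A[OF \<tau> S_nonsinks closed plateau D] by blast
  then have "?w x\<^sub>0 = 0" by (rule max_value_transform_trap[OF \<sigma>' \<tau> S_nonsinks _ x\<^sub>0])
  then show False using plateau x\<^sub>0 D by simp
qed

end

theorem proposition18:
  fixes G :: "'v ssg" and A :: "('v \<times> 'v) set" and \<sigma> \<sigma>' :: "'v \<Rightarrow> 'v"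
  assumes "ssg G"
    and "A \<subseteq> arcs G"
    and "is_max_strategy G \<sigma>"
    and "is_max_strategy G \<sigma>'"
    and "strat_succ (transform G A \<sigma>) (Inl ` verts G) (lift_strategy A \<sigma>') (lift_strategy A \<sigma>)"
  shows "strat_gt G (verts G) \<sigma>' \<sigma>"
proof -
  let ?uH = "\<lambda>x. max_value (transform G A \<sigma>) (lift_strategy A \<sigma>) (Inl x)"
    and ?wH = "\<lambda>x. max_value (transform G A \<sigma>) (lift_strategy A \<sigma>') (Inl x)"
  have improves: "\<forall>x\<in>verts G. ?uH x \<le> ?wH x" and strict: "\<exists>x\<in>verts G. ?uH x \<noteq> ?wH x"
    using assms(5) unfolding strat_succ_def strat_gt_def by auto
  have switches: "\<forall>x\<in>maxv G. ?wH x = ?uH x \<longrightarrow> \<sigma>' x = \<sigma> x"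
    using assms(5) unfolding strat_succ_def by simp
  interpret improving_switch G A \<sigma> \<sigma>'
    using assms(1-4) improves switches by unfold_locales
  have "max_value G \<sigma> x \<le> ?uH x" "?wH x \<le> max_value G \<sigma>' x" if "x \<in> verts G" for x
    using that by (rule max_value_le_transform max_value_transform_le)+
  with improves strict show ?thesis
    unfolding strat_gt_def by (smt (verit))
qed

end
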